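(* For all real $a$ and $y$, $$\int_0^{\infty}K_0(t)\,\operatorname{bei}\!\left(a\sqrt{(1+y^2)t}\right)\sin(yt)\,dt=\frac{\pi}{2}(1+y^2)^{-1/2}J_0\!\left(\frac{a^2}{4}\right)\sinh\!\left(\frac{a^2y}{4}\right).$$
   Context: $K_0$ is the Macdonald function of order $0$ and $J_0$ the Bessel function of order $0$. The Kelvin function $\operatorname{bei}$ is $\operatorname{bei}(x)=\sum_{k\ge0}\frac{(-1)^k (x/2)^{4k+2}}{((2k+1)!)^2}$. *)

theory Defs
  imports "HOL-Analysis.Analysis"
begin

definition besselJ0 :: "real \<Rightarrow> real" where
  "besselJ0 x = (\<Sum>k. (-1) ^ k * (x / 2) ^ (2 * k) / (fact k) ^ 2)"

definition kelvin_bei :: "real \<Rightarrow> real" where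
  "kelvin_bei x = (\<Sum>k. (-1) ^ k * (x / 2) ^ (4 * k + 2) / (fact (2 * k + 1)) ^ 2)"

definition besselK0 :: "real \<Rightarrow> real" where
  "besselK0 x = (LBINT s:{0..}. exp (- x * cosh s))"

end

theory Submission
  imports Defs "HOL-Probability.Sinc_Integral"
begin

text \<open>
  Writing \<open>K\<^sub>0(t) = \<integral>\<^sub>0\<^sup>\<infinity> exp (- t cosh s) ds\<close> and using Fubini,
  \<open>\<integral>\<^sub>0\<^sup>\<infinity> K\<^sub>0(t) cos (w t) dt = \<integral>\<^sub>0\<^sup>\<infinity> cosh s / (cosh\<^sup>2 s + w\<^sup>2) ds = \<pi> / (2 sqrt (1 + w\<^sup>2))\<close>.
  Let \<open>q\<^sub>n(y)\<close> be the Taylor coefficients of \<open>1 / sqrt (1 + 2 y x + (1 + y\<^sup>2) x\<^sup>2)\<close>, so that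
  \<open>1 / sqrt (1 + (y + d)\<^sup>2) = (1 / sqrt (1 + y\<^sup>2)) \<Sum>\<^sub>n q\<^sub>n(y) (d / (1 + y\<^sup>2))\<^sup>n\<close>.
  Expanding \<open>cos ((y + d) t)\<close> in powers of \<open>d\<close> and comparing coefficients expresses
  \<open>\<integral>\<^sub>0\<^sup>\<infinity> K\<^sub>0(t) t\<^sup>2\<^sup>k\<^sup>+\<^sup>1 sin (y t) dt\<close> through \<open>q\<^sub>2\<^sub>k\<^sub>+\<^sub>1(y)\<close>. The power series of
  \<open>bei\<close> may be integrated against \<open>K\<^sub>0\<close> term by term because
  \<open>\<integral>\<^sub>0\<^sup>\<infinity> K\<^sub>0(t) t\<^sup>n dt \<le> 2 n!\<close>, and the explicit formula for \<open>q\<^sub>n\<close> turns the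
  resulting series into the Cauchy product of the series of \<open>J\<^sub>0\<close> and \<open>sinh\<close>.
\<close>

section \<open>Elementary integrals\<close>

lemma nn_integral_power_exp_scaled:
  fixes p :: real
  assumes p: "p > 0"
  shows "(\<integral>\<^sup>+t. ennreal (t ^ n * exp (- (t * p)) * indicator {0<..} t) \<partial>lborel)
    = ennreal (fact n / p ^ Suc n)"
proof -
  have "(\<integral>\<^sup>+t. ennreal (t ^ n * exp (- (t * p)) * indicator {0<..} t) \<partial>lborel)
     = \<bar>1 / p\<bar> * (\<integral>\<^sup>+x. ennreal ((0 + 1 / p * x) ^ n * exp (- ((0 + 1 / p * x) * p))
          * indicator {0<..} (0 + 1 / p * x)) \<partial>lborel)"
    by (rule nn_integral_real_affine) (use p in auto)
  also have "(\<lambda>x. ennreal ((0 + 1 / p * x) ^ n * exp (- ((0 + 1 / p * x) * p)) * indicator {0<..} (0 + 1 / p * x)))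
     = (\<lambda>x. ennreal ((1 / p) ^ n) * ennreal (x ^ n * exp (- x) * indicator {0<..} x))"
    using p by (auto simp: fun_eq_iff power_divide zero_less_divide_iff ennreal_mult'[symmetric]
        split: split_indicator)
  also have "(\<integral>\<^sup>+x. ennreal ((1 / p) ^ n) * ennreal (x ^ n * exp (- x) * indicator {0<..} x) \<partial>lborel)
      = ennreal ((1 / p) ^ n) * ennreal (fact n)"
    using has_bochner_integral_I0i_power_exp_m[of n]
    by (subst nn_integral_cmult, simp, subst nn_integral_eq_integral)
       (auto simp: has_bochner_integral_iff split: split_indicator)
  finally show ?thesis
    using p by (simp add: ennreal_mult'[symmetric] field_simps ennreal_mult''[symmetric])
qed

lemma set_integrable_exp_cos:
  fixes p Y :: real
  assumes p: "p > 0"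
  shows "set_integrable lborel {0<..} (\<lambda>t. exp (- t * p) * cos (Y * t))"
proof (rule set_integrable_bound[OF integrable_I0i_exp_mscale[OF p]])
  show "set_borel_measurable lborel {0<..} (\<lambda>t. exp (- t * p) * cos (Y * t))"
    unfolding set_borel_measurable_def by measurable
  show "AE x in lborel. x \<in> {0<..} \<longrightarrow> norm (exp (- x * p) * cos (Y * x)) \<le> norm (exp (- (x * p)))"
    by (intro AE_I2) (auto simp: abs_mult intro!: mult_left_le)
qed

lemma set_integral_exp_cos:
  fixes p Y :: real
  assumes p: "p > 0"
  shows "(LBINT t:{0<..}. exp (- t * p) * cos (Y * t)) = p / (p\<^sup>2 + Y\<^sup>2)"
proof -
  have pY: "p\<^sup>2 + Y\<^sup>2 > 0" using p by (simp add: add_pos_nonneg)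
  define k where "k = 1 / (p\<^sup>2 + Y\<^sup>2)"
  define F where "F t = exp (- t * p) * (Y * sin (Y * t) - p * cos (Y * t)) * k" for t
  have "(LBINT t=0..\<infinity>. exp (- t * p) * cos (Y * t)) = 0 - F 0"
  proof (rule interval_integral_FTC_integrable)
    fix x :: real
    have k: "(p\<^sup>2 + Y\<^sup>2) * k = 1" using p by (simp add: k_def)
    have "(F has_real_derivative exp (- x * p) * cos (Y * x) * ((p\<^sup>2 + Y\<^sup>2) * k)) (at x)"
      unfolding F_def by (auto intro!: derivative_eq_intros simp: algebra_simps power2_eq_square)
    then show "(F has_vector_derivative exp (- x * p) * cos (Y * x)) (at x)"
      unfolding k by (simp add: has_real_derivative_iff_has_vector_derivative)
    show "isCont (\<lambda>t. exp (- t * p) * cos (Y * t)) x" by (intro continuous_intros)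
  next
    show "set_integrable lborel (einterval 0 \<infinity>) (\<lambda>t. exp (- t * p) * cos (Y * t))"
      using set_integrable_exp_cos[OF p] by (simp add: einterval_def zero_ereal_def greaterThan_def)
    show "((F \<circ> real_of_ereal) \<longlongrightarrow> F 0) (at_right 0)"
      unfolding F_def by (auto simp: zero_ereal_def ereal_tendsto_simps intro!: tendsto_eq_intros)
    have "((\<lambda>t. exp (- t * p)) \<longlongrightarrow> 0) at_top"
      using p by (auto intro!: exp_at_bot[THEN filterlim_compose] filterlim_tendsto_pos_mult_at_top
          filterlim_ident simp: filterlim_uminus_at_bot mult.commute[of _ p])
    then have lim: "((\<lambda>t. exp (- t * p) * ((\<bar>Y\<bar> + p) / (p\<^sup>2 + Y\<^sup>2))) \<longlongrightarrow> 0) at_top"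
      by (rule tendsto_mult_left_zero)
    have bound: "norm (F t) \<le> exp (- t * p) * ((\<bar>Y\<bar> + p) / (p\<^sup>2 + Y\<^sup>2))" for t
    proof -
      have "\<bar>Y * sin (Y * t)\<bar> \<le> \<bar>Y\<bar>" "\<bar>p * cos (Y * t)\<bar> \<le> p"
        using p by (simp_all add: abs_mult mult_left_le)
      then have "\<bar>Y * sin (Y * t) - p * cos (Y * t)\<bar> \<le> \<bar>Y\<bar> + p" by linarith
      then show ?thesis
        unfolding F_def k_def using pY by (simp add: abs_mult divide_right_mono mult_left_mono)
    qed
    have "(F \<longlongrightarrow> 0) at_top"
      by (rule Lim_null_comparison[OF always_eventually[OF allI[OF bound]] lim])
    then show "((F \<circ> real_of_ereal) \<longlongrightarrow> 0) (at_left \<infinity>)"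
      by (simp add: ereal_tendsto_simps)
  qed simp
  then show ?thesis
    using pY by (simp add: interval_lebesgue_integral_0_infty F_def k_def)
qed

lemma set_integral_cosh_div_cosh_sq:
  fixes Y :: real
  shows "(LBINT s:{0<..}. cosh s / ((cosh s)\<^sup>2 + Y\<^sup>2)) = pi / (2 * sqrt (1 + Y\<^sup>2))"
proof -
  define A where "A = sqrt (1 + Y\<^sup>2)"
  have A: "A > 0" "A\<^sup>2 = 1 + Y\<^sup>2" unfolding A_def by (auto simp: add_pos_nonneg)
  define F where "F s = arctan (sinh s / A) / A" for s
  have "(LBINT s=0..\<infinity>. cosh s / ((cosh s)\<^sup>2 + Y\<^sup>2)) = pi / 2 / A - 0"
  proof (rule interval_integral_FTC_nonneg)
    fix x :: real
    have "(F has_real_derivative inverse (1 + (sinh x / A)\<^sup>2) * (cosh x / A) / A) (at x)"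
      unfolding F_def using A by (auto intro!: derivative_eq_intros)
    moreover have "inverse (1 + (sinh x / A)\<^sup>2) * (cosh x / A) / A = cosh x / ((cosh x)\<^sup>2 + Y\<^sup>2)"
    proof -
      have "(1 + (sinh x / A)\<^sup>2) * A\<^sup>2 = A\<^sup>2 + (sinh x)\<^sup>2"
        using A(1) by (simp add: distrib_right power_divide)
      also have "\<dots> = (cosh x)\<^sup>2 + Y\<^sup>2" using A(2) cosh_square_eq[of x] by linarith
      finally have e: "(1 + (sinh x / A)\<^sup>2) * A\<^sup>2 = (cosh x)\<^sup>2 + Y\<^sup>2" .
      have "inverse a * (c / A) / A = c / (a * A\<^sup>2)" for a c :: real
        using A(1) by (cases "a = 0") (simp_all add: field_simps power2_eq_square)
      then show ?thesis unfolding e[symmetric] .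
    qed
    ultimately show "DERIV F x :> cosh x / ((cosh x)\<^sup>2 + Y\<^sup>2)" by simp
    show "isCont (\<lambda>s. cosh s / ((cosh s)\<^sup>2 + Y\<^sup>2)) x"
      by (intro continuous_intros) (simp add: add_pos_nonneg)
  next
    show "AE x in lborel. 0 < ereal x \<longrightarrow> ereal x < \<infinity> \<longrightarrow> 0 \<le> cosh x / ((cosh x)\<^sup>2 + Y\<^sup>2)"
      by (intro AE_I2) simp
    show "((F \<circ> real_of_ereal) \<longlongrightarrow> 0) (at_right 0)"
      unfolding F_def using A(1)
      by (auto simp: zero_ereal_def ereal_tendsto_simps intro!: tendsto_eq_intros)
    have lim: "((\<lambda>s. arctan (1 / A * sinh s)) \<longlongrightarrow> pi / 2) at_top"
      by (rule filterlim_compose[OF tendsto_arctan_at_top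
            filterlim_tendsto_pos_mult_at_top[OF tendsto_const _ sinh_real_at_top]]) (use A in simp)
    have "(F \<longlongrightarrow> pi / 2 / A) at_top"
      unfolding F_def using tendsto_divide[OF lim tendsto_const[of A]] A by simp
    then show "((F \<circ> real_of_ereal) \<longlongrightarrow> pi / 2 / A) (at_left \<infinity>)"
      by (simp add: ereal_tendsto_simps)
  qed simp
  then show ?thesis by (simp add: interval_lebesgue_integral_0_infty A_def)
qed

section \<open>The Macdonald function \<open>K\<^sub>0\<close>\<close>

lemma borel_measurable_cosh [measurable]: "(cosh :: real \<Rightarrow> real) \<in> borel_measurable borel"
  by (intro borel_measurable_continuous_onI continuous_intros)

lemma borel_measurable_besselK0 [measurable]: "besselK0 \<in> borel_measurable borel"
  unfolding besselK0_def set_lebesgue_integral_def by measurable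

lemma besselK0_nonneg: "0 \<le> besselK0 t"
  unfolding besselK0_def set_lebesgue_integral_def by (rule integral_nonneg_AE) auto

lemma exp_half_le_cosh: "exp s / 2 \<le> cosh (s :: real)"
  by (simp add: cosh_def)

lemma set_integrable_exp_cosh:
  fixes t :: real
  assumes t: "t > 0"
  shows "set_integrable lborel {0<..} (\<lambda>s. exp (- t * cosh s))"
proof (rule set_integrable_bound[OF integrable_I0i_exp_mscale[of "t / 2"]])
  show "set_borel_measurable lborel {0<..} (\<lambda>s. exp (- t * cosh s))"
    unfolding set_borel_measurable_def by measurable
  show "AE s in lborel. s \<in> {0<..} \<longrightarrow> norm (exp (- t * cosh s)) \<le> norm (exp (- (s * (t / 2))))"
  proof (intro AE_I2 impI)
    fix s :: real
    have "s \<le> exp s" using exp_ge_add_one_self[of s] by linarith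
    then have "t * (s / 2) \<le> t * cosh s"
      using t exp_half_le_cosh[of s] by (intro mult_left_mono) auto
    then show "norm (exp (- t * cosh s)) \<le> norm (exp (- (s * (t / 2))))" by (simp add: mult.commute)
  qed
qed (use t in simp)

lemma besselK0_eq_set_integral_pos: "besselK0 t = (LBINT s:{0<..}. exp (- t * cosh s))"
  unfolding besselK0_def
  by (rule set_integral_cong_set) (auto simp: set_borel_measurable_def intro!: AE_I[where N = "{0}"])

lemma ennreal_besselK0:
  "t > 0 \<Longrightarrow> ennreal (besselK0 t) = (\<integral>\<^sup>+s. ennreal (exp (- t * cosh s)) * indicator {0<..} s \<partial>lborel)"
  unfolding besselK0_eq_set_integral_pos set_lebesgue_integral_def
  by (subst nn_integral_eq_integral[symmetric])
     (auto dest: set_integrable_exp_cosh simp: set_integrable_def indicator_mult_ennreal mult.commute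
       intro!: nn_integral_cong)

lemma nn_integral_besselK0_mult:
  fixes \<phi> :: "real \<Rightarrow> ennreal"
  assumes [measurable]: "\<phi> \<in> borel_measurable borel"
  shows "(\<integral>\<^sup>+t. ennreal (besselK0 t) * \<phi> t * indicator {0<..} t \<partial>lborel)
       = (\<integral>\<^sup>+s. (\<integral>\<^sup>+t. ennreal (exp (- t * cosh s)) * \<phi> t * indicator {0<..} t \<partial>lborel)
            * indicator {0<..} s \<partial>lborel)"
proof -
  have "ennreal (besselK0 t) * \<phi> t * indicator {0<..} t
      = (\<integral>\<^sup>+s. ennreal (exp (- t * cosh s)) * \<phi> t * indicator {0<..} t * indicator {0<..} s \<partial>lborel)"
    for t :: real
  proof (cases "t > 0")
    case True
    then have "ennreal (besselK0 t) * \<phi> t * indicator {0<..} t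
        = (\<integral>\<^sup>+s. ennreal (exp (- t * cosh s)) * indicator {0<..} s \<partial>lborel) * (\<phi> t * indicator {0<..} t)"
      by (simp add: ennreal_besselK0 mult_ac)
    also have "\<dots> = (\<integral>\<^sup>+s. ennreal (exp (- t * cosh s)) * indicator {0<..} s * (\<phi> t * indicator {0<..} t) \<partial>lborel)"
      by (rule nn_integral_multc[symmetric]) measurable
    finally show ?thesis by (simp add: mult_ac)
  qed simp
  then have "(\<integral>\<^sup>+t. ennreal (besselK0 t) * \<phi> t * indicator {0<..} t \<partial>lborel)
      = (\<integral>\<^sup>+t. (\<integral>\<^sup>+s. ennreal (exp (- t * cosh s)) * \<phi> t * indicator {0<..} t * indicator {0<..} s \<partial>lborel) \<partial>lborel)"
    by (intro nn_integral_cong) simp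
  also have "\<dots> = (\<integral>\<^sup>+s. (\<integral>\<^sup>+t. ennreal (exp (- t * cosh s)) * \<phi> t * indicator {0<..} t * indicator {0<..} s \<partial>lborel) \<partial>lborel)"
    by (rule lborel_pair.Fubini'[symmetric]) measurable
  also have "\<dots> = (\<integral>\<^sup>+s. (\<integral>\<^sup>+t. ennreal (exp (- t * cosh s)) * \<phi> t * indicator {0<..} t \<partial>lborel) * indicator {0<..} s \<partial>lborel)"
    by (intro nn_integral_cong) (simp add: nn_integral_multc)
  finally show ?thesis .
qed

lemma nn_integral_exp_cosh:
  "(\<integral>\<^sup>+t. ennreal (exp (- t * cosh s)) * indicator {0<..} t \<partial>lborel) = ennreal (1 / cosh s)"
  using nn_integral_power_exp_scaled[of "cosh s" 0]
  by (simp add: mult.commute indicator_mult_ennreal ennreal_mult'[symmetric] cong: nn_integral_cong)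

lemma nn_integral_inverse_cosh_le: "(\<integral>\<^sup>+s. ennreal (1 / cosh s) * indicator {0<..} s \<partial>lborel) \<le> 2"
proof -
  have "(\<integral>\<^sup>+s. ennreal (1 / cosh s) * indicator {0<..} s \<partial>lborel)
      \<le> (\<integral>\<^sup>+s. ennreal 2 * ennreal (s ^ 0 * exp (- (s * 1)) * indicator {0<..} s) \<partial>lborel)"
  proof (intro nn_integral_mono)
    fix s :: real
    have "1 / cosh s \<le> 2 * exp (- s)"
      using exp_half_le_cosh[of s] by (simp add: exp_minus field_simps)
    then have "ennreal (1 / cosh s) \<le> ennreal (2 * exp (- s))" by (rule ennreal_leI)
    also have "\<dots> = ennreal 2 * ennreal (exp (- s))" by (rule ennreal_mult') simp
    finally show "ennreal (1 / cosh s) * indicator {0<..} s \<le> ennreal 2 * ennreal (s ^ 0 * exp (- (s * 1)) * indicator {0<..} s)"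
      by (simp split: split_indicator)
  qed
  also have "\<dots> = 2"
    by (subst nn_integral_cmult) (auto simp: nn_integral_power_exp_scaled[of 1 0, simplified])
  finally show ?thesis .
qed

text \<open>By Tonelli, \<open>\<integral>\<^sub>0\<^sup>\<infinity> K\<^sub>0(t) t\<^sup>n dt = n! \<integral>\<^sub>0\<^sup>\<infinity> ds / cosh\<^sup>n\<^sup>+\<^sup>1 s\<close>.\<close>

lemma nn_integral_besselK0_power_le:
  "(\<integral>\<^sup>+t. ennreal (besselK0 t) * ennreal (t ^ n) * indicator {0<..} t \<partial>lborel) \<le> ennreal (2 * fact n)"
proof -
  have "(\<integral>\<^sup>+t. ennreal (besselK0 t) * ennreal (t ^ n) * indicator {0<..} t \<partial>lborel)
     = (\<integral>\<^sup>+s. (\<integral>\<^sup>+t. ennreal (exp (- t * cosh s)) * ennreal (t ^ n) * indicator {0<..} t \<partial>lborel)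
          * indicator {0<..} s \<partial>lborel)"
    by (rule nn_integral_besselK0_mult) measurable
  also have "\<dots> = (\<integral>\<^sup>+s. ennreal (fact n / cosh s ^ Suc n) * indicator {0<..} s \<partial>lborel)"
  proof (intro nn_integral_cong)
    fix s :: real
    have "(\<integral>\<^sup>+t. ennreal (exp (- t * cosh s)) * ennreal (t ^ n) * indicator {0<..} t \<partial>lborel)
        = (\<integral>\<^sup>+t. ennreal (t ^ n * exp (- (t * cosh s)) * indicator {0<..} t) \<partial>lborel)"
      by (intro nn_integral_cong) (auto simp: ennreal_mult'[symmetric] mult_ac split: split_indicator)
    also have "\<dots> = ennreal (fact n / cosh s ^ Suc n)"
      by (rule nn_integral_power_exp_scaled) simp
    finally show "(\<integral>\<^sup>+t. ennreal (exp (- t * cosh s)) * ennreal (t ^ n) * indicator {0<..} t \<partial>lborel)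
        * indicator {0<..} s = ennreal (fact n / cosh s ^ Suc n) * indicator {0<..} s"
      by simp
  qed
  also have "\<dots> \<le> (\<integral>\<^sup>+s. ennreal (fact n) * (ennreal (1 / cosh s) * indicator {0<..} s) \<partial>lborel)"
  proof (intro nn_integral_mono)
    fix s :: real
    have "cosh s ^ 1 \<le> cosh s ^ Suc n"
      using cosh_real_ge_1[of s] by (intro power_increasing) auto
    then have "fact n / cosh s ^ Suc n \<le> fact n * (1 / cosh s)"
      using cosh_real_ge_1[of s] by (simp add: divide_simps)
    then show "ennreal (fact n / cosh s ^ Suc n) * indicator {0<..} s
        \<le> ennreal (fact n) * (ennreal (1 / cosh s) * indicator {0<..} s)"
      by (auto simp: ennreal_mult'[symmetric] split: split_indicator intro!: ennreal_leI)
  qed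
  also have "\<dots> = ennreal (fact n) * (\<integral>\<^sup>+s. ennreal (1 / cosh s) * indicator {0<..} s \<partial>lborel)"
    by (rule nn_integral_cmult) measurable
  also have "\<dots> \<le> ennreal (fact n) * 2"
    by (intro mult_left_mono nn_integral_inverse_cosh_le) auto
  finally show ?thesis by (simp add: ennreal_mult mult.commute)
qed

lemma nn_integral_besselK0_mult_le:
  fixes g :: "real \<Rightarrow> real"
  assumes [measurable]: "g \<in> borel_measurable borel"
    and bound: "\<And>t. t > 0 \<Longrightarrow> \<bar>g t\<bar> \<le> c * t ^ n"
  shows "(\<integral>\<^sup>+t. ennreal (norm (indicator {0<..} t *\<^sub>R (besselK0 t * g t))) \<partial>lborel) \<le> ennreal (2 * c * fact n)"
proof -
  have c: "c \<ge> 0" using bound[of 1] by simp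
  have "(\<integral>\<^sup>+t. ennreal (norm (indicator {0<..} t *\<^sub>R (besselK0 t * g t))) \<partial>lborel)
      \<le> (\<integral>\<^sup>+t. ennreal c * (ennreal (besselK0 t) * ennreal (t ^ n) * indicator {0<..} t) \<partial>lborel)"
  proof (intro nn_integral_mono)
    fix t :: real
    show "ennreal (norm (indicator {0<..} t *\<^sub>R (besselK0 t * g t)))
        \<le> ennreal c * (ennreal (besselK0 t) * ennreal (t ^ n) * indicator {0<..} t)"
    proof (cases "t > 0")
      case True
      then have "norm (indicator {0<..} t *\<^sub>R (besselK0 t * g t)) \<le> c * (besselK0 t * t ^ n)"
        using mult_left_mono[OF bound[OF True] besselK0_nonneg[of t]]
        by (simp add: abs_mult besselK0_nonneg mult.left_commute)
      then have "ennreal (norm (indicator {0<..} t *\<^sub>R (besselK0 t * g t)))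
          \<le> ennreal (c * (besselK0 t * t ^ n))"
        by (rule ennreal_leI)
      also have "\<dots> = ennreal c * (ennreal (besselK0 t) * ennreal (t ^ n) * indicator {0<..} t)"
        using True c besselK0_nonneg[of t] by (simp add: ennreal_mult)
      finally show ?thesis .
    qed simp
  qed
  also have "\<dots> = ennreal c * (\<integral>\<^sup>+t. ennreal (besselK0 t) * ennreal (t ^ n) * indicator {0<..} t \<partial>lborel)"
    by (rule nn_integral_cmult) measurable
  also have "\<dots> \<le> ennreal c * ennreal (2 * fact n)"
    by (intro mult_left_mono nn_integral_besselK0_power_le) auto
  finally show ?thesis using c by (simp add: ennreal_mult mult_ac)
qed

lemma set_integrable_besselK0_mult:
  fixes g :: "real \<Rightarrow> real"
  assumes "g \<in> borel_measurable borel" and "\<And>t. t > 0 \<Longrightarrow> \<bar>g t\<bar> \<le> c * t ^ n"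
  shows "set_integrable lborel {0<..} (\<lambda>t. besselK0 t * g t)"
  unfolding set_integrable_def
proof (rule integrableI_bounded)
  show "(\<lambda>t. indicator {0<..} t *\<^sub>R (besselK0 t * g t)) \<in> borel_measurable lborel"
    using assms(1) by measurable
  have "(\<integral>\<^sup>+t. ennreal (norm (indicator {0<..} t *\<^sub>R (besselK0 t * g t))) \<partial>lborel) \<le> ennreal (2 * c * fact n)"
    by (rule nn_integral_besselK0_mult_le[OF assms])
  then show "(\<integral>\<^sup>+t. ennreal (norm (indicator {0<..} t *\<^sub>R (besselK0 t * g t))) \<partial>lborel) < \<infinity>"
    using order.strict_trans1 by fastforce
qed

lemma integral_norm_besselK0_mult_le:
  fixes g :: "real \<Rightarrow> real"
  assumes "g \<in> borel_measurable borel" and bound: "\<And>t. t > 0 \<Longrightarrow> \<bar>g t\<bar> \<le> c * t ^ n"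
  shows "(\<integral>t. norm (indicator {0<..} t *\<^sub>R (besselK0 t * g t)) \<partial>lborel) \<le> 2 * c * fact n"
proof -
  have c: "c \<ge> 0" using bound[of 1] by simp
  have "integrable lborel (\<lambda>t. norm (indicator {0<..} t *\<^sub>R (besselK0 t * g t)))"
    using set_integrable_besselK0_mult[OF assms] unfolding set_integrable_def by (rule integrable_norm)
  then have "ennreal (\<integral>t. norm (indicator {0<..} t *\<^sub>R (besselK0 t * g t)) \<partial>lborel)
      = (\<integral>\<^sup>+t. ennreal (norm (indicator {0<..} t *\<^sub>R (besselK0 t * g t))) \<partial>lborel)"
    by (intro nn_integral_eq_integral[symmetric]) auto
  also have "\<dots> \<le> ennreal (2 * c * fact n)" by (rule nn_integral_besselK0_mult_le[OF assms])
  finally show ?thesis using c by (subst (asm) ennreal_le_iff) auto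
qed


lemma nn_integral_exp_cosh_kernel_le:
  fixes g :: "real \<Rightarrow> real"
  assumes [measurable]: "g \<in> borel_measurable borel" and B: "\<And>t. \<bar>g t\<bar> \<le> B"
  shows "(\<integral>\<^sup>+t. ennreal (norm (indicator {0<..} s * indicator {0<..} t * exp (- t * cosh s) * g t)) \<partial>lborel)
    \<le> ennreal B * (ennreal (1 / cosh s) * indicator {0<..} s)"
proof -
  have B0: "B \<ge> 0" using B[of 0] by simp
  have "(\<integral>\<^sup>+t. ennreal (norm (indicator {0<..} s * indicator {0<..} t * exp (- t * cosh s) * g t)) \<partial>lborel)
      \<le> (\<integral>\<^sup>+t. ennreal B * indicator {0<..} s * (ennreal (exp (- t * cosh s)) * indicator {0<..} t) \<partial>lborel)"
  proof (intro nn_integral_mono)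
    fix t :: real
    have "norm (indicator {0<..} s * indicator {0<..} t * exp (- t * cosh s) * g t)
        \<le> B * indicator {0<..} s * (exp (- t * cosh s) * indicator {0<..} t)"
      using B[of t] by (auto simp: abs_mult split: split_indicator intro!: mult_right_mono)
    then have "ennreal (norm (indicator {0<..} s * indicator {0<..} t * exp (- t * cosh s) * g t))
        \<le> ennreal (B * indicator {0<..} s * (exp (- t * cosh s) * indicator {0<..} t))"
      by (rule ennreal_leI)
    also have "\<dots> = ennreal B * indicator {0<..} s * (ennreal (exp (- t * cosh s)) * indicator {0<..} t)"
      using B0 by (auto simp: ennreal_mult split: split_indicator)
    finally show "ennreal (norm (indicator {0<..} s * indicator {0<..} t * exp (- t * cosh s) * g t))
        \<le> ennreal B * indicator {0<..} s * (ennreal (exp (- t * cosh s)) * indicator {0<..} t)" .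
  qed
  also have "\<dots> = ennreal B * indicator {0<..} s * (\<integral>\<^sup>+t. ennreal (exp (- t * cosh s)) * indicator {0<..} t \<partial>lborel)"
    by (rule nn_integral_cmult) measurable
  also have "\<dots> = ennreal B * (ennreal (1 / cosh s) * indicator {0<..} s)"
    using nn_integral_exp_cosh[of s] by (simp add: mult_ac)
  finally show ?thesis .
qed

lemma integrable_exp_cosh_kernel:
  fixes g :: "real \<Rightarrow> real"
  assumes [measurable]: "g \<in> borel_measurable borel" and B: "\<And>t. \<bar>g t\<bar> \<le> B"
  shows "integrable (lborel \<Otimes>\<^sub>M lborel)
    (\<lambda>(s, t). indicator {0<..} s * indicator {0<..} t * exp (- t * cosh s) * g t)"
proof (rule integrableI_bounded)
  have "(\<integral>\<^sup>+x. ennreal (norm ((\<lambda>(s, t). indicator {0<..} s * indicator {0<..} t * exp (- t * cosh s) * g t) x))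
      \<partial>(lborel \<Otimes>\<^sub>M lborel))
      \<le> (\<integral>\<^sup>+s. ennreal B * (ennreal (1 / cosh s) * indicator {0<..} s) \<partial>lborel)"
    using nn_integral_exp_cosh_kernel_le[OF assms]
    by (subst lborel.nn_integral_fst[symmetric]) (auto simp: case_prod_beta intro!: nn_integral_mono)
  also have "\<dots> = ennreal B * (\<integral>\<^sup>+s. ennreal (1 / cosh s) * indicator {0<..} s \<partial>lborel)"
    by (rule nn_integral_cmult) measurable
  also have "\<dots> \<le> ennreal B * 2" by (intro mult_left_mono nn_integral_inverse_cosh_le) auto
  also have "\<dots> < \<infinity>" by (simp add: ennreal_mult_less_top)
  finally show "(\<integral>\<^sup>+x. ennreal (norm ((\<lambda>(s, t). indicator {0<..} s * indicator {0<..} t * exp (- t * cosh s) * g t) x))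
      \<partial>(lborel \<Otimes>\<^sub>M lborel)) < \<infinity>" .
qed measurable

lemma set_integral_besselK0_mult_eq_iterated:
  fixes g :: "real \<Rightarrow> real"
  assumes [measurable]: "g \<in> borel_measurable borel" and "\<And>t. \<bar>g t\<bar> \<le> B"
  shows "(LBINT t:{0<..}. besselK0 t * g t) = (LBINT s:{0<..}. (LBINT t:{0<..}. exp (- t * cosh s) * g t))"
proof -
  define F where "F s t = indicator {0<..} s * indicator {0<..} t * exp (- t * cosh s) * g t" for s t :: real
  have "integrable (lborel \<Otimes>\<^sub>M lborel) (\<lambda>(s, t). F s t)"
    unfolding F_def by (rule integrable_exp_cosh_kernel) fact+
  then have Fubini: "(\<integral>t. (\<integral>s. F s t \<partial>lborel) \<partial>lborel) = (\<integral>s. (\<integral>t. F s t \<partial>lborel) \<partial>lborel)"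
    by (rule lborel_pair.Fubini_integral)
  have "(\<integral>s. F s t \<partial>lborel) = indicator {0<..} t *\<^sub>R (besselK0 t * g t)" for t
  proof -
    have "F s t = (indicator {0<..} s *\<^sub>R exp (- t * cosh s)) * (indicator {0<..} t * g t)" for s
      by (simp add: F_def mult_ac)
    then have "(\<integral>s. F s t \<partial>lborel) = (\<integral>s. indicator {0<..} s *\<^sub>R exp (- t * cosh s) \<partial>lborel) * (indicator {0<..} t * g t)"
      by (simp only: integral_mult_left_zero)
    then show ?thesis by (simp add: besselK0_eq_set_integral_pos set_lebesgue_integral_def mult_ac)
  qed
  moreover have "(\<integral>t. F s t \<partial>lborel) = indicator {0<..} s *\<^sub>R (LBINT t:{0<..}. exp (- t * cosh s) * g t)" for s
  proof -
    have "F s t = indicator {0<..} s * (indicator {0<..} t *\<^sub>R (exp (- t * cosh s) * g t))" for t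
      by (simp add: F_def mult_ac)
    then show ?thesis unfolding set_lebesgue_integral_def by (simp only: integral_mult_right_zero) simp
  qed
  ultimately show ?thesis using Fubini by (simp add: set_lebesgue_integral_def)
qed

lemma set_integral_besselK0_cos:
  "(LBINT t:{0<..}. besselK0 t * cos (w * t)) = pi / (2 * sqrt (1 + w\<^sup>2))"
proof -
  have "(LBINT t:{0<..}. besselK0 t * cos (w * t)) = (LBINT s:{0<..}. (LBINT t:{0<..}. exp (- t * cosh s) * cos (w * t)))"
    by (rule set_integral_besselK0_mult_eq_iterated[where B = 1]) auto
  also have "\<dots> = (LBINT s:{0<..}. cosh s / ((cosh s)\<^sup>2 + w\<^sup>2))"
    by (intro set_lebesgue_integral_cong allI impI set_integral_exp_cos) auto
  also have "\<dots> = pi / (2 * sqrt (1 + w\<^sup>2))" by (rule set_integral_cosh_div_cosh_sq)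
  finally show ?thesis .
qed

lemma besselK0_termwise_integration:
  fixes h :: "nat \<Rightarrow> real \<Rightarrow> real" and b :: "nat \<Rightarrow> real" and p :: "nat \<Rightarrow> nat"
  assumes [measurable]: "\<And>n. h n \<in> borel_measurable borel"
    and bound: "\<And>n t. t > 0 \<Longrightarrow> \<bar>h n t\<bar> \<le> b n * t ^ p n"
    and summable_moments: "summable (\<lambda>n. b n * fact (p n))"
    and summable_bound: "\<And>t. t > 0 \<Longrightarrow> summable (\<lambda>n. b n * t ^ p n)"
    and sums: "\<And>t. t > 0 \<Longrightarrow> (\<lambda>n. h n t) sums H t"
  shows "set_integrable lborel {0<..} (\<lambda>t. besselK0 t * H t)"
    and "(\<lambda>n. LBINT t:{0<..}. besselK0 t * h n t) sums (LBINT t:{0<..}. besselK0 t * H t)"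
proof -
  define f where "f n t = indicator {0<..} t *\<^sub>R (besselK0 t * h n t)" for n t
  have integrable: "integrable lborel (f n)" for n
    using set_integrable_besselK0_mult[OF _ bound] unfolding f_def set_integrable_def by simp
  have "summable (\<lambda>n. norm (f n t))" for t
  proof (cases "t > 0")
    case True
    then have "summable (\<lambda>n. \<bar>h n t\<bar>)"
      by (intro summable_comparison_test[OF _ summable_bound[OF True]]) (auto intro: bound)
    then have "summable (\<lambda>n. besselK0 t * \<bar>h n t\<bar>)" by (rule summable_mult)
    then show ?thesis using True besselK0_nonneg[of t] by (simp add: f_def abs_mult)
  qed (simp add: f_def)
  then have summable_AE: "AE t in lborel. summable (\<lambda>n. norm (f n t))" by simp
  have "summable (\<lambda>n. \<integral>t. norm (f n t) \<partial>lborel)"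
  proof (rule summable_comparison_test[OF _ summable_mult[OF summable_moments, of 2]])
    show "\<exists>N. \<forall>n\<ge>N. norm (\<integral>t. norm (f n t) \<partial>lborel) \<le> 2 * (b n * fact (p n))"
      using integral_norm_besselK0_mult_le[OF _ bound] by (simp add: f_def mult.assoc)
  qed
  note series = integrable summable_AE this
  have suminf_f: "(\<Sum>n. f n t) = indicator {0<..} t *\<^sub>R (besselK0 t * H t)" for t
  proof (cases "t > 0")
    case True
    then have "(\<lambda>n. besselK0 t * h n t) sums (besselK0 t * H t)" by (intro sums_mult sums)
    then show ?thesis using True by (simp add: f_def sums_iff)
  qed (simp add: f_def)
  show "set_integrable lborel {0<..} (\<lambda>t. besselK0 t * H t)"
    using integrable_suminf[OF series] unfolding suminf_f set_integrable_def .
  show "(\<lambda>n. LBINT t:{0<..}. besselK0 t * h n t) sums (LBINT t:{0<..}. besselK0 t * H t)"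
    using sums_integral[OF series] unfolding suminf_f by (simp add: set_lebesgue_integral_def f_def)
qed

section \<open>The coefficients \<open>q\<^sub>n\<close>\<close>

text \<open>Extended by zero to negative \<open>k\<close>, so that \<open>exp_term_succ\<close> holds for all integers and
  \<open>quad_term_recurrence\<close> needs no boundary cases.\<close>

definition exp_term :: "real \<Rightarrow> int \<Rightarrow> real" where
  "exp_term z k = (if 0 \<le> k then z ^ nat k / fact (nat k) else 0)"

lemma exp_term_succ: "of_int (k + 1) * exp_term z (k + 1) = z * exp_term z k"
proof (cases "0 \<le> k")
  case True
  then have "nat (k + 1) = Suc (nat k)" by simp
  with True show ?thesis
    by (simp add: exp_term_def field_simps del: of_nat_Suc) (simp add: algebra_simps)
qed (auto simp: exp_term_def)

definition quad_weight :: "nat \<Rightarrow> real" where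
  "quad_weight r = (-1) ^ r / (4 ^ r * fact r ^ 2)"

lemma quad_weight_Suc: "4 * real (Suc r) ^ 2 * quad_weight (Suc r) = - quad_weight r"
  by (simp add: quad_weight_def field_simps power2_eq_square del: of_nat_Suc)

definition quad_term :: "real \<Rightarrow> nat \<Rightarrow> nat \<Rightarrow> real" where
  "quad_term y n r = fact n * quad_weight r * exp_term (- y) (int n - 2 * int r)"

lemma quad_term_recurrence:
  "real (m + 2) * quad_term y (m + 2) r + real (2 * m + 3) * y * quad_term y (m + 1) r
     + real (m + 1) * y\<^sup>2 * quad_term y m r
   = 4 * real (m + 1) * real r ^ 2 * quad_weight r * fact m * exp_term (- y) (int m - 2 * int r + 2)"
proof -
  define k where "k = int m - 2 * int r"
  define E where "E i = exp_term (- y) (k + i)" for i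
  have E1: "of_int (k + 1) * E 1 = - y * E 0" and E2: "of_int (k + 2) * E 2 = - y * E 1"
    using exp_term_succ[of k "- y"] exp_term_succ[of "k + 1" "- y"] by (simp_all add: E_def add.assoc)
  have "((real m + 2)\<^sup>2 - 4 * real r ^ 2) * E 2 + real (2 * m + 3) * y * E 1 + y\<^sup>2 * E 0
      = (real m + 2 + 2 * real r) * (of_int (k + 2) * E 2 + y * E 1) + y * (of_int (k + 1) * E 1 + y * E 0)"
    by (simp add: k_def algebra_simps power2_eq_square)
  also have "\<dots> = 0" unfolding E1 E2 by (simp add: algebra_simps power2_eq_square)
  finally have key: "((real m + 2)\<^sup>2 - 4 * real r ^ 2) * E 2 + real (2 * m + 3) * y * E 1 + y\<^sup>2 * E 0 = 0" .
  have facts: "fact (m + 2) = (real m + 2) * (real m + 1) * fact m" "fact (m + 1) = (real m + 1) * fact m"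
    by (simp_all add: algebra_simps)
  have "int (m + 2) - 2 * int r = k + 2" "int (m + 1) - 2 * int r = k + 1" "int m - 2 * int r + 2 = k + 2"
    by (simp_all add: k_def)
  then show ?thesis
    using arg_cong[OF key, of "\<lambda>u. (real m + 1) * fact m * quad_weight r * u"]
    unfolding quad_term_def E_def facts by (simp add: k_def algebra_simps power2_eq_square)
qed

lemma quad_term_eq_0: "n < 2 * r \<Longrightarrow> quad_term y n r = 0"
  by (simp add: quad_term_def exp_term_def)

lemma quad_term_explicit:
  "quad_term y (2 * r + j) r = fact (2 * r + j) * quad_weight r * (- y) ^ j / fact j"
  by (simp add: quad_term_def exp_term_def)

text \<open>\<open>q\<^sub>n(y)\<close>; see \<open>quad_coeff_sums\<close> for the generating function.\<close>

definition quad_coeff :: "real \<Rightarrow> nat \<Rightarrow> real" where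
  "quad_coeff y n = (\<Sum>r<Suc n. quad_term y n r)"

lemma quad_coeff_eq_sum:
  assumes "n < 2 * N"
  shows "quad_coeff y n = (\<Sum>r<N. quad_term y n r)"
proof (cases "N \<le> Suc n")
  case True
  then show ?thesis
    unfolding quad_coeff_def
    by (intro sum.mono_neutral_right) (use assms in \<open>auto intro!: quad_term_eq_0\<close>)
next
  case False
  then show ?thesis
    unfolding quad_coeff_def
    by (intro sum.mono_neutral_left) (auto intro!: quad_term_eq_0)
qed

lemma quad_coeff_0: "quad_coeff y 0 = 1"
  and quad_coeff_1: "quad_coeff y (Suc 0) = - y"
  by (simp_all add: quad_coeff_def quad_term_def quad_weight_def exp_term_def)

lemma quad_coeff_recurrence:
  "real (m + 2) * quad_coeff y (m + 2) + real (2 * m + 3) * y * quad_coeff y (m + 1)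
     + real (m + 1) * (1 + y\<^sup>2) * quad_coeff y m = 0"
proof -
  define R where "R r = 4 * real (m + 1) * real r ^ 2 * quad_weight r * fact m * exp_term (- y) (int m - 2 * int r + 2)" for r
  have R_Suc: "R (Suc r) = - real (m + 1) * quad_term y m r" for r
  proof -
    have "int m - 2 * int (Suc r) + 2 = int m - 2 * int r" by simp
    then have "R (Suc r) = real (m + 1) * fact m * exp_term (- y) (int m - 2 * int r)
        * (4 * real (Suc r) ^ 2 * quad_weight (Suc r))"
      unfolding R_def by (simp only: mult_ac)
    then show ?thesis unfolding quad_weight_Suc quad_term_def by (simp add: algebra_simps)
  qed
  have "quad_coeff y n = (\<Sum>r<Suc (m + 2). quad_term y n r)" if "n \<le> m + 2" for n
    using that by (intro quad_coeff_eq_sum) simp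
  then have "real (m + 2) * quad_coeff y (m + 2) + real (2 * m + 3) * y * quad_coeff y (m + 1)
      + real (m + 1) * y\<^sup>2 * quad_coeff y m = (\<Sum>r<Suc (m + 2). R r)"
    by (simp only: le_refl le_add1 add_le_mono sum_distrib_left sum.distrib[symmetric]
        quad_term_recurrence R_def)
  also have "\<dots> = - real (m + 1) * (\<Sum>r<m + 2. quad_term y m r)"
    by (simp only: sum.lessThan_Suc_shift R_Suc sum_distrib_left) (simp add: R_def)
  also have "\<dots> = - real (m + 1) * quad_coeff y m"
    by (subst quad_coeff_eq_sum[of m "m + 2"]) simp_all
  finally show ?thesis by (simp add: algebra_simps)
qed

lemma fact_double_le: "fact (2 * r) \<le> (4::real) ^ r * fact r ^ 2"
proof -
  have "real ((2 * r) choose r) \<le> 4 ^ r"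
    using binomial_le_pow2[of "2 * r" r] by (simp add: power_mult flip: of_nat_le_iff)
  moreover have "fact (2 * r) = real ((2 * r) choose r) * fact r ^ 2"
    using binomial_fact[of r "2 * r", where 'a = real] by (simp add: power2_eq_square mult_2 field_simps)
  ultimately show ?thesis by (simp add: mult_right_mono)
qed

lemma abs_quad_term_le:
  "\<bar>quad_term y n r\<bar> \<le> (if 2 * r \<le> n then real (n choose (2 * r)) * \<bar>y\<bar> ^ (n - 2 * r) else 0)"
proof (cases "2 * r \<le> n")
  case True
  then obtain j where n: "n = 2 * r + j" using le_Suc_ex by blast
  have "\<bar>quad_term y n r\<bar> = fact n / (4 ^ r * fact r ^ 2) * \<bar>y\<bar> ^ j / fact j"
    by (simp add: n quad_term_explicit quad_weight_def abs_mult power_abs)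
  also have "\<dots> \<le> fact n / fact (2 * r) * \<bar>y\<bar> ^ j / fact j"
    by (intro divide_right_mono mult_right_mono divide_left_mono fact_double_le) auto
  also have "\<dots> = real (n choose (2 * r)) * \<bar>y\<bar> ^ (n - 2 * r)"
    using binomial_fact[OF True, where 'a = real] by (simp add: n)
  finally show ?thesis using True by simp
qed (simp add: quad_term_eq_0)

lemma abs_quad_coeff_le: "\<bar>quad_coeff y n\<bar> \<le> (1 + \<bar>y\<bar>) ^ n"
proof -
  define g where "g k = (if k \<le> n then real (n choose k) * \<bar>y\<bar> ^ (n - k) else 0)" for k
  have "\<bar>quad_coeff y n\<bar> \<le> (\<Sum>r<Suc n. g (2 * r))"
    unfolding quad_coeff_def g_def
    by (rule order_trans[OF sum_abs sum_mono]) (use abs_quad_term_le in simp)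
  also have "\<dots> = (\<Sum>k\<in>(\<lambda>r. 2 * r) ` {..<Suc n}. g k)"
    by (subst sum.reindex) (auto simp: inj_on_def)
  also have "\<dots> \<le> (\<Sum>k<2 * n + 2. g k)"
    by (intro sum_mono2) (auto simp: g_def)
  also have "\<dots> = (\<Sum>k\<le>n. real (n choose k) * \<bar>y\<bar> ^ (n - k))"
    by (rule sum.mono_neutral_cong_right) (auto simp: g_def)
  also have "\<dots> = (1 + \<bar>y\<bar>) ^ n"
    by (subst binomial_ring) simp
  finally show ?thesis .
qed

lemma summable_quad_coeff:
  assumes "\<bar>x\<bar> < 1 / (1 + \<bar>y\<bar>)"
  shows "summable (\<lambda>n. quad_coeff y n * x ^ n)"
proof (rule summable_comparison_test)
  have "(1 + \<bar>y\<bar>) * \<bar>x\<bar> < 1"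
    using assms by (simp add: field_simps add_pos_nonneg)
  then show "summable (\<lambda>n. ((1 + \<bar>y\<bar>) * \<bar>x\<bar>) ^ n)"
    by (intro summable_geometric) simp
  show "\<exists>N. \<forall>n\<ge>N. norm (quad_coeff y n * x ^ n) \<le> ((1 + \<bar>y\<bar>) * \<bar>x\<bar>) ^ n"
    by (auto simp: abs_mult power_abs power_mult_distrib intro!: mult_right_mono abs_quad_coeff_le)
qed

definition quad_form :: "real \<Rightarrow> real \<Rightarrow> real" where
  "quad_form y x = 1 + 2 * y * x + (1 + y\<^sup>2) * x\<^sup>2"

lemma quad_form_pos: "0 < quad_form y x"
proof -
  have "quad_form y x = (1 + y * x)\<^sup>2 + x\<^sup>2"
    by (simp add: quad_form_def algebra_simps power2_eq_square)
  moreover have "0 < (1 + y * x)\<^sup>2 + x\<^sup>2"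
    by (cases "x = 0") (auto intro!: add_nonneg_pos)
  ultimately show ?thesis by simp
qed

definition shift_coeffs :: "(nat \<Rightarrow> real) \<Rightarrow> nat \<Rightarrow> real" where
  "shift_coeffs a n = (case n of 0 \<Rightarrow> 0 | Suc m \<Rightarrow> a m)"

lemma sums_shift_coeffs:
  assumes "(\<lambda>n. a n * x ^ n) sums s"
  shows "(\<lambda>n. shift_coeffs a n * x ^ n) sums (x * s)"
proof -
  have "(\<lambda>n. shift_coeffs a (Suc n) * x ^ Suc n) sums (x * s)"
    using sums_mult[OF assms, of x] by (simp add: shift_coeffs_def mult_ac)
  then show ?thesis
    by (subst (asm) sums_Suc_iff) (simp add: shift_coeffs_def)
qed

lemma quad_coeff_ode_coeffs:
  fixes y :: real
  defines "q \<equiv> quad_coeff y" and "c \<equiv> 1 + y\<^sup>2"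
  shows "diffs q n + 2 * y * shift_coeffs (diffs q) n + c * shift_coeffs (shift_coeffs (diffs q)) n
    + y * q n + c * shift_coeffs q n = 0"
proof (cases n)
  case 0
  then show ?thesis by (simp add: q_def diffs_def shift_coeffs_def quad_coeff_0 quad_coeff_1)
next
  case (Suc k)
  show ?thesis
  proof (cases k)
    case 0
    then show ?thesis
      using quad_coeff_recurrence[of 0 y] \<open>n = Suc k\<close>
      by (simp add: q_def c_def diffs_def shift_coeffs_def quad_coeff_0 quad_coeff_1 algebra_simps)
  next
    case (Suc m)
    then show ?thesis
      using quad_coeff_recurrence[of "m + 1" y] \<open>n = Suc k\<close>
      by (simp add: q_def c_def diffs_def shift_coeffs_def algebra_simps eval_nat_numeral)
  qed
qed

lemma quad_series_ode:
  assumes x: "\<bar>x\<bar> < 1 / (1 + \<bar>y\<bar>)"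
  shows "quad_form y x * (\<Sum>n. diffs (quad_coeff y) n * x ^ n)
    + (y + (1 + y\<^sup>2) * x) * (\<Sum>n. quad_coeff y n * x ^ n) = 0"
proof -
  define q where "q = quad_coeff y"
  define S where "S = (\<Sum>n. q n * x ^ n)"
  define S' where "S' = (\<Sum>n. diffs q n * x ^ n)"
  have S: "(\<lambda>n. q n * x ^ n) sums S"
    unfolding S_def q_def using summable_quad_coeff[OF x] by (rule summable_sums)
  have "summable (\<lambda>n. diffs q n * x ^ n)"
    unfolding q_def
    by (rule termdiff_converges[of x "1 / (1 + \<bar>y\<bar>)"]) (use x summable_quad_coeff in auto)
  then have S': "(\<lambda>n. diffs q n * x ^ n) sums S'"
    unfolding S'_def by (rule summable_sums)
  define c where "c = 1 + y\<^sup>2"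
  have "(\<lambda>n. diffs q n * x ^ n + 2 * y * (shift_coeffs (diffs q) n * x ^ n)
        + c * (shift_coeffs (shift_coeffs (diffs q)) n * x ^ n)
        + y * (q n * x ^ n) + c * (shift_coeffs q n * x ^ n))
      sums (S' + 2 * y * (x * S') + c * (x * (x * S')) + y * S + c * (x * S))"
    by (intro sums_add sums_mult sums_shift_coeffs S S')
  moreover have "(\<lambda>n. diffs q n * x ^ n + 2 * y * (shift_coeffs (diffs q) n * x ^ n)
        + c * (shift_coeffs (shift_coeffs (diffs q)) n * x ^ n)
        + y * (q n * x ^ n) + c * (shift_coeffs q n * x ^ n)) = (\<lambda>n. 0)"
  proof
    fix n
    have "diffs q n + 2 * y * shift_coeffs (diffs q) n + c * shift_coeffs (shift_coeffs (diffs q)) n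
        + y * q n + c * shift_coeffs q n = 0"
      unfolding q_def c_def by (rule quad_coeff_ode_coeffs)
    then show "diffs q n * x ^ n + 2 * y * (shift_coeffs (diffs q) n * x ^ n)
        + c * (shift_coeffs (shift_coeffs (diffs q)) n * x ^ n)
        + y * (q n * x ^ n) + c * (shift_coeffs q n * x ^ n) = 0"
      by (metis (no_types, lifting) distrib_right mult.assoc mult_zero_left)
  qed
  ultimately have "S' + 2 * y * (x * S') + c * (x * (x * S')) + y * S + c * (x * S) = 0"
    by (simp add: sums_iff)
  then show ?thesis
    by (simp add: q_def c_def S_def S'_def quad_form_def algebra_simps power2_eq_square)
qed

lemma has_field_derivative_quad_series:
  assumes "\<bar>x\<bar> < 1 / (1 + \<bar>y\<bar>)"
  shows "((\<lambda>x. \<Sum>n. quad_coeff y n * x ^ n) has_field_derivative (\<Sum>n. diffs (quad_coeff y) n * x ^ n)) (at x)"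
  by (rule termdiffs_strong[of _ "(\<bar>x\<bar> + 1 / (1 + \<bar>y\<bar>)) / 2"]) (use assms summable_quad_coeff in auto)

lemma has_field_derivative_sqrt_quad_form:
  "((\<lambda>x. sqrt (quad_form y x)) has_field_derivative (y + (1 + y\<^sup>2) * x) / sqrt (quad_form y x)) (at x)"
proof -
  define r where "r = sqrt (quad_form y x)"
  have r: "0 < r" using quad_form_pos[of y x] by (simp add: r_def)
  have "((\<lambda>x. sqrt (quad_form y x)) has_field_derivative inverse r / 2 * (2 * y + (1 + y\<^sup>2) * (2 * x))) (at x)"
    using r unfolding r_def quad_form_def by (auto intro!: derivative_eq_intros simp: power2_eq_square)
  moreover have "inverse r / 2 * (2 * y + (1 + y\<^sup>2) * (2 * x)) = (y + (1 + y\<^sup>2) * x) / r"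
    using r by (simp add: field_simps)
  ultimately show ?thesis unfolding r_def by (rule DERIV_cong)
qed

text \<open>The series solves the linear ODE \<open>quad_series_ode\<close>, so its product with
  \<open>sqrt (quad_form y x)\<close> is constant.\<close>

lemma quad_coeff_sums:
  assumes x: "\<bar>x\<bar> < 1 / (1 + \<bar>y\<bar>)"
  shows "(\<lambda>n. quad_coeff y n * x ^ n) sums (1 / sqrt (quad_form y x))"
proof -
  define R where "R = 1 / (1 + \<bar>y\<bar>)"
  define S where "S x = (\<Sum>n. quad_coeff y n * x ^ n)" for x
  define S' where "S' x = (\<Sum>n. diffs (quad_coeff y) n * x ^ n)" for x
  have "((\<lambda>x. S x * sqrt (quad_form y x)) has_field_derivative 0) (at x within ball 0 R)"
    if "x \<in> ball 0 R" for x
  proof -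
    have xR: "\<bar>x\<bar> < R" using that by simp
    define r where "r = sqrt (quad_form y x)"
    have r: "0 < r" "r\<^sup>2 = quad_form y x"
      using quad_form_pos[of y x] by (simp_all add: r_def)
    have "((\<lambda>x. S x * sqrt (quad_form y x)) has_field_derivative S' x * r + (y + (1 + y\<^sup>2) * x) / r * S x) (at x)"
      unfolding r_def S_def S'_def
      using xR by (intro DERIV_mult has_field_derivative_quad_series has_field_derivative_sqrt_quad_form) (simp add: R_def)
    moreover have "S' x * r + (y + (1 + y\<^sup>2) * x) / r * S x = (quad_form y x * S' x + (y + (1 + y\<^sup>2) * x) * S x) / r"
      using r by (simp add: field_simps power2_eq_square)
    moreover have "quad_form y x * S' x + (y + (1 + y\<^sup>2) * x) * S x = 0"
      unfolding S_def S'_def using xR by (intro quad_series_ode) (simp add: R_def)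
    ultimately show ?thesis by (simp add: has_field_derivative_at_within)
  qed
  then have "\<exists>C. \<forall>z\<in>ball 0 R. S z * sqrt (quad_form y z) = C"
    by (rule has_field_derivative_zero_constant[OF convex_ball])
  then obtain C where C: "\<And>z. z \<in> ball 0 R \<Longrightarrow> S z * sqrt (quad_form y z) = C"
    by blast
  have "C = 1"
    using C[of 0] by (simp add: R_def S_def quad_form_def quad_coeff_0 add_pos_nonneg)
  then have "S x = 1 / sqrt (quad_form y x)"
    using C[of x] x quad_form_pos[of y x] by (simp add: R_def field_simps)
  then show ?thesis
    using summable_quad_coeff[OF x] by (simp add: S_def sums_iff)
qed

section \<open>The moments \<open>\<integral>\<^sub>0\<^sup>\<infinity> K\<^sub>0(t) t\<^sup>n sin (y t) dt\<close>\<close>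

text \<open>The \<open>n\<close>-th Taylor coefficient in \<open>d\<close> of \<open>\<integral>\<^sub>0\<^sup>\<infinity> K\<^sub>0(t) cos ((y + d) t) dt\<close>.\<close>

definition besselK0_cos_taylor :: "real \<Rightarrow> nat \<Rightarrow> real" where
  "besselK0_cos_taylor y n =
     (LBINT t:{0<..}. besselK0 t * ((cos (y * t) * cos_coeff n - sin (y * t) * sin_coeff n) * t ^ n))"

lemma abs_cos_sin_coeff_le:
  assumes "\<bar>a\<bar> \<le> 1" "\<bar>b\<bar> \<le> 1"
  shows "\<bar>a * cos_coeff n - b * sin_coeff n\<bar> \<le> 1 / fact n"
  using assms by (cases "even n") (auto simp: cos_coeff_def sin_coeff_def abs_mult divide_right_mono)

lemma besselK0_cos_taylor_sums:
  assumes d: "\<bar>d\<bar> < 1"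
  shows "(\<lambda>n. besselK0_cos_taylor y n * d ^ n) sums (pi / (2 * sqrt (1 + (y + d)\<^sup>2)))"
proof -
  define h where "h n t = (cos (y * t) * cos_coeff n - sin (y * t) * sin_coeff n) * t ^ n * d ^ n" for n t
  have "(\<lambda>n. LBINT t:{0<..}. besselK0 t * h n t) sums (LBINT t:{0<..}. besselK0 t * cos ((y + d) * t))"
  proof (rule besselK0_termwise_integration(2)[where b = "\<lambda>n. \<bar>d\<bar> ^ n / fact n" and p = "\<lambda>n. n"])
    show "h n \<in> borel_measurable borel" for n unfolding h_def by measurable
    show "\<bar>h n t\<bar> \<le> \<bar>d\<bar> ^ n / fact n * t ^ n" if "t > 0" for n t
    proof -
      have "\<bar>h n t\<bar> = \<bar>cos (y * t) * cos_coeff n - sin (y * t) * sin_coeff n\<bar> * (t ^ n * \<bar>d\<bar> ^ n)"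
        using that by (simp add: h_def abs_mult power_abs)
      also have "\<dots> \<le> 1 / fact n * (t ^ n * \<bar>d\<bar> ^ n)"
        using that by (intro mult_right_mono abs_cos_sin_coeff_le) auto
      finally show ?thesis by (simp add: mult_ac)
    qed
    show "summable (\<lambda>n. \<bar>d\<bar> ^ n / fact n * fact n)"
      using summable_geometric[of "\<bar>d\<bar>"] d by simp
    show "summable (\<lambda>n. \<bar>d\<bar> ^ n / fact n * t ^ n)" for t
      using summable_exp[of "\<bar>d\<bar> * t"] by (simp add: power_mult_distrib divide_inverse mult_ac)
    show "(\<lambda>n. h n t) sums cos ((y + d) * t)" for t
    proof -
      have "(\<lambda>n. cos (y * t) * (cos_coeff n * (d * t) ^ n) - sin (y * t) * (sin_coeff n * (d * t) ^ n))
          sums (cos (y * t) * cos (d * t) - sin (y * t) * sin (d * t))"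
        using cos_converges[of "d * t"] sin_converges[of "d * t"] by (intro sums_diff sums_mult) simp_all
      then show ?thesis
        by (simp add: h_def cos_add distrib_right power_mult_distrib algebra_simps)
    qed
  qed
  moreover have "(LBINT t:{0<..}. besselK0 t * h n t) = besselK0_cos_taylor y n * d ^ n" for n
    unfolding h_def besselK0_cos_taylor_def set_integral_mult_left[symmetric] by (simp add: mult_ac)
  ultimately show ?thesis by (simp add: set_integral_besselK0_cos)
qed

lemma powser_sums_zero_imp_coeff_zero:
  fixes a :: "nat \<Rightarrow> real"
  assumes r: "r > 0" and sums: "\<And>x. \<bar>x\<bar> < r \<Longrightarrow> (\<lambda>n. a n * x ^ n) sums 0"
  shows "a m = 0"
proof (induction m rule: less_induct)
  case (less m)
  have "(\<lambda>n. a (n + m) * x ^ n) sums 0" if "x \<noteq> 0" "norm x < r" for x :: real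
  proof -
    have "(\<lambda>n. a (n + m) * x ^ (n + m)) sums 0"
      using sums_zero_iff_shift[of m "\<lambda>n. a n * x ^ n" 0] less sums[of x] that by simp
    then have "(\<lambda>n. a (n + m) * x ^ n * x ^ m / x ^ m) sums (0 / x ^ m)"
      by (intro sums_divide) (simp add: power_add mult_ac)
    then show ?thesis using that by simp
  qed
  then have "((\<lambda>_. 0) \<longlongrightarrow> a (0 + m)) (at (0 :: real))"
    using powser_limit_0_strong[OF r, of "\<lambda>n. a (n + m)" "\<lambda>_. 0"] by simp
  then show ?case using LIM_unique[OF _ tendsto_const] by simp
qed

lemma sums_quad_coeff_rescaled:
  fixes x y :: real
  defines "c \<equiv> 1 + y\<^sup>2"
  assumes x: "\<bar>x\<bar> < c / (1 + \<bar>y\<bar>)"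
  shows "(\<lambda>n. pi / 2 * (1 / sqrt c) * quad_coeff y n / c ^ n * x ^ n) sums (pi / (2 * sqrt (1 + (y + x)\<^sup>2)))"
proof -
  have c: "c > 0" unfolding c_def by (simp add: add_pos_nonneg)
  have x_div: "\<bar>x / c\<bar> < 1 / (1 + \<bar>y\<bar>)"
    using x c by (simp add: abs_div field_simps add_pos_nonneg)
  have "quad_form y (x / c) = 1 + 2 * y * (x / c) + c * (x / c)\<^sup>2"
    by (simp add: quad_form_def c_def)
  also have "\<dots> = (c + 2 * y * x + x\<^sup>2) / c"
    using c by (simp add: field_simps power2_eq_square)
  also have "\<dots> = (1 + (y + x)\<^sup>2) / c"
    by (simp add: c_def power2_eq_square algebra_simps)
  finally have "sqrt c * sqrt (quad_form y (x / c)) = sqrt (1 + (y + x)\<^sup>2)"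
    using c by (simp flip: real_sqrt_mult)
  then have limit: "pi / 2 * (1 / sqrt c) * (1 / sqrt (quad_form y (x / c))) = pi / (2 * sqrt (1 + (y + x)\<^sup>2))"
    by (simp add: field_simps)
  have coeffs: "(\<lambda>n. pi / 2 * (1 / sqrt c) * (quad_coeff y n * (x / c) ^ n))
      = (\<lambda>n. pi / 2 * (1 / sqrt c) * quad_coeff y n / c ^ n * x ^ n)"
    by (simp add: fun_eq_iff power_divide)
  show ?thesis
    using sums_mult[OF quad_coeff_sums[OF x_div], of "pi / 2 * (1 / sqrt c)"]
    unfolding limit coeffs .
qed

lemma besselK0_cos_taylor_eq:
  "besselK0_cos_taylor y n = pi / 2 * (1 / sqrt (1 + y\<^sup>2)) * quad_coeff y n / (1 + y\<^sup>2) ^ n"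
proof -
  define c where "c = 1 + y\<^sup>2"
  define r where "r = min 1 (c / (1 + \<bar>y\<bar>))"
  have r: "r > 0" by (simp add: r_def c_def add_pos_nonneg)
  have "(\<lambda>n. (besselK0_cos_taylor y n - pi / 2 * (1 / sqrt c) * quad_coeff y n / c ^ n) * x ^ n) sums 0"
    if x: "\<bar>x\<bar> < r" for x
  proof -
    have "(\<lambda>n. pi / 2 * (1 / sqrt c) * quad_coeff y n / c ^ n * x ^ n) sums (pi / (2 * sqrt (1 + (y + x)\<^sup>2)))"
      using x unfolding c_def by (intro sums_quad_coeff_rescaled) (simp add: r_def c_def)
    moreover have "(\<lambda>n. besselK0_cos_taylor y n * x ^ n) sums (pi / (2 * sqrt (1 + (y + x)\<^sup>2)))"
      using x by (intro besselK0_cos_taylor_sums) (simp add: r_def)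
    ultimately show ?thesis
      using sums_diff by (fastforce simp: algebra_simps)
  qed
  then have "besselK0_cos_taylor y n - pi / 2 * (1 / sqrt c) * quad_coeff y n / c ^ n = 0"
    by (rule powser_sums_zero_imp_coeff_zero[OF r])
  then show ?thesis by (simp add: c_def)
qed

lemma set_integral_besselK0_odd_power_sin:
  "(LBINT t:{0<..}. besselK0 t * (t ^ (2 * k + 1) * sin (y * t)))
     = - ((-1) ^ k * fact (2 * k + 1)) * besselK0_cos_taylor y (2 * k + 1)"
proof -
  define M where "M = (LBINT t:{0<..}. besselK0 t * (t ^ (2 * k + 1) * sin (y * t)))"
  have "besselK0_cos_taylor y (2 * k + 1)
      = (LBINT t:{0<..}. besselK0 t * (t ^ (2 * k + 1) * sin (y * t)) * (- ((-1) ^ k / fact (2 * k + 1))))"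
    unfolding besselK0_cos_taylor_def
    by (intro set_lebesgue_integral_cong allI impI) (auto simp: cos_coeff_def sin_coeff_def mult_ac)
  also have "\<dots> = M * (- ((-1) ^ k / fact (2 * k + 1)))"
    unfolding M_def by (rule set_integral_mult_left)
  finally have "- ((-1) ^ k * fact (2 * k + 1)) * besselK0_cos_taylor y (2 * k + 1)
      = ((-1) ^ k * (-1) ^ k) * (fact (2 * k + 1) / fact (2 * k + 1)) * M"
    by simp
  then show ?thesis by (simp add: M_def flip: power_mult_distrib)
qed

section \<open>Series of \<open>J\<^sub>0\<close>, \<open>sinh\<close> and \<open>bei\<close>\<close>

lemma sinh_odd_sums: "(\<lambda>m. z ^ (2 * m + 1) / fact (2 * m + 1)) sums sinh (z :: real)"
proof -
  define f where "f n = (if even n then 0 else z ^ n /\<^sub>R fact n)" for n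
  have "f sums sinh z" unfolding f_def by (rule sinh_converges)
  moreover have "strict_mono (\<lambda>m :: nat. 2 * m + 1)" by (rule strict_monoI) simp
  moreover have "f n = 0" if "n \<notin> range (\<lambda>m :: nat. 2 * m + 1)" for n
    using that oddE by (fastforce simp: f_def)
  ultimately have "(\<lambda>m. f (2 * m + 1)) sums sinh z"
    using sums_mono_reindex[of "\<lambda>m. 2 * m + 1" f] by blast
  moreover have "f (2 * m + 1) = z ^ (2 * m + 1) / fact (2 * m + 1)" for m
    by (simp add: f_def divide_inverse)
  ultimately show ?thesis by simp
qed

lemma summable_abs_sinh_odd: "summable (\<lambda>m. \<bar>z\<bar> ^ (2 * m + 1) / fact (2 * m + 1) :: real)"
  using sinh_odd_sums[of "\<bar>z\<bar>"] by (rule sums_summable)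

lemma summable_odd_power_div_fact_sq:
  fixes z :: real
  assumes "z \<ge> 0"
  shows "summable (\<lambda>k. z ^ (2 * k + 1) / fact (2 * k + 1) ^ 2)"
proof (rule summable_comparison_test[OF _ summable_abs_sinh_odd[of z]])
  have "(fact m :: real) \<le> fact m ^ 2" for m
    using mult_left_mono[OF fact_ge_1[of m, where 'a = real], of "fact m"] by (simp add: power2_eq_square)
  then have "z ^ m / fact m ^ 2 \<le> z ^ m / fact m" for m
    using assms by (intro divide_left_mono) auto
  then have "z ^ (2 * n + 1) / fact (2 * n + 1) ^ 2 \<le> z ^ (2 * n + 1) / fact (2 * n + 1)" for n .
  then show "\<exists>N. \<forall>n\<ge>N. norm (z ^ (2 * n + 1) / fact (2 * n + 1) ^ 2) \<le> \<bar>z\<bar> ^ (2 * n + 1) / fact (2 * n + 1)"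
    using assms by simp
qed

lemma summable_norm_besselJ0_series:
  "summable (\<lambda>r. norm ((-1) ^ r * (b / 2) ^ (2 * r) / fact r ^ 2 :: real))"
proof (rule summable_comparison_test[OF _ summable_exp[of "(b / 2)\<^sup>2"]])
  have "(fact n :: real) \<le> fact n ^ 2" for n
    using mult_left_mono[OF fact_ge_1[of n, where 'a = real], of "fact n"] by (simp add: power2_eq_square)
  then have "((b / 2)\<^sup>2) ^ n / fact n ^ 2 \<le> ((b / 2)\<^sup>2) ^ n / fact n" for n
    by (intro divide_left_mono) auto
  moreover have "norm (norm ((-1) ^ n * (b / 2) ^ (2 * n) / fact n ^ 2 :: real)) = ((b / 2)\<^sup>2) ^ n / fact n ^ 2"
    for n by (simp add: abs_mult power_mult)
  moreover have "((b / 2)\<^sup>2) ^ n / fact n = inverse (fact n) * ((b / 2)\<^sup>2) ^ n" for n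
    by (metis divide_inverse mult.commute)
  ultimately show "\<exists>N. \<forall>n\<ge>N. norm (norm ((-1) ^ n * (b / 2) ^ (2 * n) / fact n ^ 2 :: real))
      \<le> inverse (fact n) * ((b / 2)\<^sup>2) ^ n"
    by simp
qed

lemma besselJ0_sinh_cauchy_term:
  assumes "r \<le> k"
  shows "(-1) ^ r * (b / 2) ^ (2 * r) / fact r ^ 2 * ((b * y) ^ (2 * (k - r) + 1) / fact (2 * (k - r) + 1))
    = - (b ^ (2 * k + 1) * quad_term y (2 * k + 1) r / fact (2 * k + 1))"
proof -
  obtain j where k: "k = r + j" using assms le_Suc_ex by blast
  have "quad_term y (2 * r + (2 * j + 1)) r / fact (2 * k + 1)
      = - (quad_weight r * y ^ (2 * j + 1) / fact (2 * j + 1))"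
    unfolding quad_term_explicit by (simp add: k power_minus_odd)
  then have T: "quad_term y (2 * k + 1) r / fact (2 * k + 1) = - (quad_weight r * y ^ (2 * j + 1) / fact (2 * j + 1))"
    by (simp add: k algebra_simps)
  have "(-1) ^ r * (b / 2) ^ (2 * r) / fact r ^ 2 * ((b * y) ^ (2 * (k - r) + 1) / fact (2 * (k - r) + 1))
      = quad_weight r * (b ^ (2 * r) * b ^ (2 * j + 1)) * y ^ (2 * j + 1) / fact (2 * j + 1)"
    by (simp add: k quad_weight_def power_mult power_divide power_mult_distrib)
  also have "b ^ (2 * r) * b ^ (2 * j + 1) = b ^ (2 * k + 1)"
    by (simp add: k algebra_simps flip: power_add)
  finally show ?thesis
    unfolding times_divide_eq_right[symmetric] T by (simp add: algebra_simps)
qed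

text \<open>Up to sign, the left-hand side is the Cauchy product of the series of \<open>J\<^sub>0(b)\<close> and \<open>sinh (b y)\<close>.\<close>

lemma sums_quad_coeff_odd:
  "(\<lambda>k. b ^ (2 * k + 1) * quad_coeff y (2 * k + 1) / fact (2 * k + 1)) sums (- (besselJ0 b * sinh (b * y)))"
proof -
  define A where "A r = (-1) ^ r * (b / 2) ^ (2 * r) / fact r ^ 2" for r
  define B where "B m = (b * y) ^ (2 * m + 1) / fact (2 * m + 1)" for m
  have "summable (\<lambda>k. norm (A k))"
    unfolding A_def by (rule summable_norm_besselJ0_series)
  moreover have "(\<lambda>k. norm (B k)) = (\<lambda>k. \<bar>b * y\<bar> ^ (2 * k + 1) / fact (2 * k + 1))"
    by (simp add: fun_eq_iff B_def power_abs abs_mult)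
  then have "summable (\<lambda>k. norm (B k))"
    using summable_abs_sinh_odd[of "b * y"] by (simp only:)
  ultimately have "(\<lambda>k. \<Sum>i\<le>k. A i * B (k - i)) sums ((\<Sum>k. A k) * (\<Sum>k. B k))"
    by (rule Cauchy_product_sums)
  moreover have "(\<Sum>k. A k) = besselJ0 b" by (simp add: A_def besselJ0_def)
  moreover have "(\<Sum>k. B k) = sinh (b * y)" using sinh_odd_sums[of "b * y"] by (simp add: B_def sums_iff)
  moreover have "(\<Sum>i\<le>k. A i * B (k - i)) = - (b ^ (2 * k + 1) * quad_coeff y (2 * k + 1) / fact (2 * k + 1))" for k
  proof -
    have "(\<Sum>i\<le>k. A i * B (k - i)) = (\<Sum>r\<le>k. - (b ^ (2 * k + 1) * quad_term y (2 * k + 1) r / fact (2 * k + 1)))"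
      unfolding A_def B_def by (intro sum.cong refl besselJ0_sinh_cauchy_term) simp
    also have "\<dots> = - (b ^ (2 * k + 1) * quad_coeff y (2 * k + 1) / fact (2 * k + 1))"
      by (simp add: quad_coeff_eq_sum[of _ "Suc k"] lessThan_Suc_atMost sum_negf
          flip: sum_divide_distrib sum_distrib_left)
    finally show ?thesis .
  qed
  ultimately have "(\<lambda>k. - (b ^ (2 * k + 1) * quad_coeff y (2 * k + 1) / fact (2 * k + 1)))
      sums (besselJ0 b * sinh (b * y))"
    by simp
  then show ?thesis using sums_minus by fastforce
qed

lemma kelvin_bei_sums:
  "(\<lambda>k. (-1) ^ k * ((x / 2)\<^sup>2) ^ (2 * k + 1) / fact (2 * k + 1) ^ 2) sums kelvin_bei x"
proof -
  define z where "z = (x / 2)\<^sup>2"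
  have "(x / 2) ^ (4 * k + 2) = z ^ (2 * k + 1)" for k
    unfolding z_def power_mult[symmetric] by (simp add: algebra_simps)
  then have bei: "kelvin_bei x = (\<Sum>k. (-1) ^ k * z ^ (2 * k + 1) / fact (2 * k + 1) ^ 2)"
    by (simp add: kelvin_bei_def)
  have z: "z \<ge> 0" by (simp add: z_def)
  then have "norm ((-1) ^ k * z ^ (2 * k + 1) / fact (2 * k + 1) ^ 2) = z ^ (2 * k + 1) / fact (2 * k + 1) ^ 2" for k
    by (simp add: abs_mult power_abs)
  then have "summable (\<lambda>k. norm ((-1) ^ k * z ^ (2 * k + 1) / fact (2 * k + 1) ^ 2))"
    using summable_odd_power_div_fact_sq[OF z] by (simp only:)
  then show ?thesis
    unfolding z_def[symmetric] bei by (rule summable_sums[OF summable_norm_cancel])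
qed

section \<open>Integrating the series of \<open>bei\<close> term by term\<close>

lemma set_integral_besselK0_bei_term:
  fixes b y :: real
  defines "c \<equiv> 1 + y\<^sup>2"
  shows "(LBINT t:{0<..}. besselK0 t * ((-1) ^ k * (b * c) ^ (2 * k + 1) / fact (2 * k + 1) ^ 2
            * t ^ (2 * k + 1) * sin (y * t)))
       = - (pi / 2 * (1 / sqrt c)) * (b ^ (2 * k + 1) * quad_coeff y (2 * k + 1) / fact (2 * k + 1))"
proof -
  define n where "n = 2 * k + 1"
  define s where "s = (-1 :: real) ^ k"
  define F where "F = (fact n :: real)"
  have s: "s * s = 1" by (simp add: s_def flip: power_mult_distrib)
  have F: "F \<noteq> 0" by (simp add: F_def)
  have "c > 0" by (simp add: c_def add_pos_nonneg)
  then have c: "c ^ n \<noteq> 0" by simp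
  have "(LBINT t:{0<..}. besselK0 t * (s * (b * c) ^ n / F\<^sup>2 * t ^ n * sin (y * t)))
      = (LBINT t:{0<..}. besselK0 t * (t ^ n * sin (y * t)) * (s * (b * c) ^ n / F\<^sup>2))"
    by (simp add: mult_ac)
  also have "\<dots> = (LBINT t:{0<..}. besselK0 t * (t ^ n * sin (y * t))) * (s * (b * c) ^ n / F\<^sup>2)"
    by (rule set_integral_mult_left)
  also have "\<dots> = - (s * F) * (pi / 2 * (1 / sqrt c) * quad_coeff y n / c ^ n) * (s * (b * c) ^ n / F\<^sup>2)"
    unfolding n_def s_def F_def c_def set_integral_besselK0_odd_power_sin besselK0_cos_taylor_eq ..
  also have "\<dots> = - (pi / 2 * (1 / sqrt c)) * (b ^ n * quad_coeff y n / F) * (s * s) * (c ^ n / c ^ n) * (F / F)"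
    by (simp add: power_mult_distrib power2_eq_square field_simps)
  finally show ?thesis
    using s F c by (simp add: n_def s_def F_def)
qed

lemma besselK0_bei_termwise:
  fixes a c y :: real
  assumes c: "c \<ge> 0"
  defines "h k t \<equiv> (-1) ^ k * (a\<^sup>2 / 4 * c) ^ (2 * k + 1) / fact (2 * k + 1) ^ 2 * t ^ (2 * k + 1) * sin (y * t)"
  shows "set_integrable lborel {0<..} (\<lambda>t. besselK0 t * (kelvin_bei (a * sqrt (c * t)) * sin (y * t)))"
    and "(\<lambda>k. LBINT t:{0<..}. besselK0 t * h k t)
      sums (LBINT t:{0<..}. besselK0 t * (kelvin_bei (a * sqrt (c * t)) * sin (y * t)))"
proof -
  define lam where "lam = a\<^sup>2 / 4 * c"
  have h: "h k t = (-1) ^ k * lam ^ (2 * k + 1) / fact (2 * k + 1) ^ 2 * t ^ (2 * k + 1) * sin (y * t)" for k t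
    by (simp add: h_def lam_def)
  define B where "B k = \<bar>lam\<bar> ^ (2 * k + 1) / fact (2 * k + 1) ^ 2" for k
  have measurable: "h k \<in> borel_measurable borel" for k
    unfolding h_def by measurable
  have bound: "\<bar>h k t\<bar> \<le> B k * t ^ (2 * k + 1)" if "t > 0" for k t
  proof -
    have "\<bar>h k t\<bar> = B k * t ^ (2 * k + 1) * \<bar>sin (y * t)\<bar>"
      using that by (simp add: h B_def abs_mult power_abs)
    also have "\<dots> \<le> B k * t ^ (2 * k + 1) * 1"
      using that by (intro mult_left_mono) (auto simp: B_def)
    finally show ?thesis by simp
  qed
  have moments: "summable (\<lambda>k. B k * fact (2 * k + 1))"
    using summable_abs_sinh_odd[of lam] by (simp add: B_def power2_eq_square)
  have dominating: "summable (\<lambda>k. B k * t ^ (2 * k + 1))" if "t > 0" for t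
    using summable_odd_power_div_fact_sq[of "\<bar>lam\<bar> * t"] that
    by (simp add: B_def power_mult_distrib mult_ac)
  have sums: "(\<lambda>k. h k t) sums (kelvin_bei (a * sqrt (c * t)) * sin (y * t))" if "t > 0" for t
  proof -
    have "(a * sqrt (c * t) / 2)\<^sup>2 = lam * t"
      using that c by (simp add: lam_def power_divide power_mult_distrib)
    then have "(\<lambda>k. (-1) ^ k * (lam * t) ^ (2 * k + 1) / fact (2 * k + 1) ^ 2 * sin (y * t))
        sums (kelvin_bei (a * sqrt (c * t)) * sin (y * t))"
      using kelvin_bei_sums[of "a * sqrt (c * t)"] by (intro sums_mult2) simp
    then show ?thesis by (simp add: h power_mult_distrib mult_ac)
  qed
  show "set_integrable lborel {0<..} (\<lambda>t. besselK0 t * (kelvin_bei (a * sqrt (c * t)) * sin (y * t)))"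
    and "(\<lambda>k. LBINT t:{0<..}. besselK0 t * h k t)
      sums (LBINT t:{0<..}. besselK0 t * (kelvin_bei (a * sqrt (c * t)) * sin (y * t)))"
    using besselK0_termwise_integration[OF measurable bound moments dominating sums] by blast+
qed

theorem mainTheorem4:
  fixes a y :: real
  shows "set_integrable lborel {0<..}
           (\<lambda>t. besselK0 t * kelvin_bei (a * sqrt ((1 + y\<^sup>2) * t)) * sin (y * t))
       \<and> (LBINT t:{0<..}. besselK0 t * kelvin_bei (a * sqrt ((1 + y\<^sup>2) * t)) * sin (y * t))
           = pi / 2 * (1 / sqrt (1 + y\<^sup>2)) * besselJ0 (a\<^sup>2 / 4) * sinh (a\<^sup>2 * y / 4)"
proof -
  define c where "c = 1 + y\<^sup>2"
  define b where "b = a\<^sup>2 / 4"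
  note termwise = besselK0_bei_termwise[of c a y, folded b_def]
  have "(\<lambda>k. LBINT t:{0<..}. besselK0 t * ((-1) ^ k * (b * c) ^ (2 * k + 1) / fact (2 * k + 1) ^ 2
          * t ^ (2 * k + 1) * sin (y * t)))
      = (\<lambda>k. - (pi / 2 * (1 / sqrt c)) * (b ^ (2 * k + 1) * quad_coeff y (2 * k + 1) / fact (2 * k + 1)))"
    unfolding c_def by (rule ext) (rule set_integral_besselK0_bei_term)
  moreover have "- (pi / 2 * (1 / sqrt c)) * (- (besselJ0 b * sinh (b * y)))
      = pi / 2 * (1 / sqrt c) * besselJ0 b * sinh (b * y)"
    by simp
  ultimately have "(LBINT t:{0<..}. besselK0 t * (kelvin_bei (a * sqrt (c * t)) * sin (y * t)))
      = pi / 2 * (1 / sqrt c) * besselJ0 b * sinh (b * y)"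
    using sums_unique2[OF termwise(2)] sums_mult[OF sums_quad_coeff_odd[of b y], of "- (pi / 2 * (1 / sqrt c))"]
    by (simp only: c_def) (simp add: add_pos_nonneg)
  then show ?thesis
    using termwise(1) by (simp add: b_def c_def add_pos_nonneg mult_ac)
qed

end
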